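(* Let $N=2^n$ and $i,j\in[0,N)$ with $i<j$. Then every $\mathbf{x}\in C^{(n)}(i,j):=\mathbf{g}_i+\mathbf{g}_j+\langle\mathbf{g}_{j+1},\ldots,\mathbf{g}_{N-1}\rangle$ satisfies $\mathrm{w}(\mathbf{x})\ge\mathrm{w}(\mathbf{g}_i+\mathbf{g}_j)$, and $$\mathrm{w}(\mathbf{g}_i+\mathbf{g}_j)=\mathrm{w}(\mathbf{g}_i)+\mathrm{w}(\mathbf{g}_j)-2^{t_{i,j}+1},\qquad t_{i,j}:=\sum_{k=0}^{n-1}b_k(i)b_k(j).$$
   Context: All vectors are binary (over $GF(2)$), indices are zero-based, $\mathrm{w}(\cdot)$ is Hamming weight and $\langle\cdot\rangle$ denotes linear span over $GF(2)$. Let $G_N=\begin{pmatrix}1&0\\1&1\end{pmatrix}^{\otimes n}$ for $N=2^n$, with rows $\mathbf{g}_0,\ldots,\mathbf{g}_{N-1}$. For $k\in[0,N)$, $b_r(k)$ denotes the $r$-th bit of $k$, i.e. $k=\sum_{r=0}^{n-1}b_r(k)2^r$. *)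

theory Defs
  imports Main "HOL-Library.Z2"
begin

text \<open>Binary vectors of length N are functions nat => bit (coordinates c < N matter).\<close>

text \<open>Kernel matrix F = [[1,0],[1,1]].\<close>
definition kernF :: "nat \<Rightarrow> nat \<Rightarrow> bit" where
  "kernF a b = (if a < 2 \<and> b < 2 \<and> b \<le> a then 1 else 0)"

text \<open>G n r c is entry (r,c) of the n-fold Kronecker power of F, via
  (F \<otimes> G_m)[r,c] = F[r div m, c div m] * G_m[r mod m, c mod m].\<close>
fun polarG :: "nat \<Rightarrow> nat \<Rightarrow> nat \<Rightarrow> bit" where
  "polarG 0 r c = (if r = 0 \<and> c = 0 then 1 else 0)"
| "polarG (Suc n) r c =
     kernF (r div 2^n) (c div 2^n) * polarG n (r mod 2^n) (c mod 2^n)"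

definition grow :: "nat \<Rightarrow> nat \<Rightarrow> (nat \<Rightarrow> bit)" where
  "grow n r = (\<lambda>c. polarG n r c)"

definition hw :: "nat \<Rightarrow> (nat \<Rightarrow> bit) \<Rightarrow> nat" where
  "hw n x = card {c. c < 2^n \<and> x c \<noteq> 0}"

definition gf2_span :: "(nat \<Rightarrow> (nat \<Rightarrow> bit)) \<Rightarrow> nat set \<Rightarrow> (nat \<Rightarrow> bit) set" where
  "gf2_span v I = {(\<lambda>c. \<Sum>k\<in>I. a k * v k c) | a. True}"

definition cosetC :: "nat \<Rightarrow> nat \<Rightarrow> nat \<Rightarrow> (nat \<Rightarrow> bit) set" where
  "cosetC n i j = {(\<lambda>c. grow n i c + grow n j c + y c) | y. y \<in> gf2_span (grow n) {j+1..<2^n}}"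

definition bitk :: "nat \<Rightarrow> nat \<Rightarrow> nat" where
  "bitk r k = (k div 2^r) mod 2"

definition tij :: "nat \<Rightarrow> nat \<Rightarrow> nat \<Rightarrow> nat" where
  "tij n i j = (\<Sum>k<n. bitk k i * bitk k j)"

end

theory Submission
  imports Defs
begin

text \<open>Since \<open>G\<^sub>2\<^sub>N = [[G\<^sub>N, 0], [G\<^sub>N, G\<^sub>N]]\<close>, the codeword of a message \<open>a\<close> of length \<open>2N\<close>
  is \<open>(u + v | v)\<close>, where \<open>u\<close> and \<open>v\<close> encode the two halves of \<open>a\<close>, and each row of
  \<open>G\<^sub>2\<^sub>N\<close> restricts to rows of \<open>G\<^sub>N\<close> on both halves of the coordinates. The minimum
  weight of the coset is then proved by induction on \<open>n\<close>, comparing \<open>g\<^sub>i + g\<^sub>j\<close> with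
  \<open>g\<^sub>i + g\<^sub>j + (higher rows)\<close> half by half. When \<open>i\<close> and \<open>j\<close> fall into different halves
  this needs a stronger invariant, also proved by induction: adding higher rows to \<open>g\<^sub>j\<close> never
  decreases its weight outside the support of any row \<open>g\<^sub>i\<close>.
  The weight formula is \<open>w(x + y) = w(x) + w(y) - 2 w(x y)\<close> together with the fact that the
  supports of \<open>g\<^sub>i\<close> and \<open>g\<^sub>j\<close> meet in \<open>2^t\<^sub>i\<^sub>j\<close> coordinates: the intersection doubles
  exactly when the top bits of \<open>i\<close> and \<open>j\<close> are both set.\<close>

lemma sum_lessThan_add: "(\<Sum>c<m + k. f c) = (\<Sum>c<m. f c) + (\<Sum>c<k. f (c + m))"
  for m k :: nat
  by (induction k) (simp_all add: add.commute add.left_commute)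

lemma card_less_eq_sum: "card {c. c < N \<and> P c} = (\<Sum>c<N. of_bool (P c))"
  for N :: nat
  by (simp add: Int_def conj_commute)

lemma bit_add_self: "x + x = 0" for x :: bit
  by (cases x) simp_all

lemma hw_eq_sum: "hw n x = (\<Sum>c<2^n. of_bool (x c \<noteq> 0))"
  unfolding hw_def card_less_eq_sum ..

lemma hw_Suc: "hw (Suc n) x = hw n x + hw n (\<lambda>c. x (c + 2^n))"
  unfolding hw_eq_sum power_Suc mult_2 sum_lessThan_add ..

lemma hw_cong: "(\<And>c. c < 2^n \<Longrightarrow> x c = y c) \<Longrightarrow> hw n x = hw n y"
  unfolding hw_def by (metis (lifting))

lemma hw_add_le: "hw n (\<lambda>c. x c + y c) \<le> hw n x + hw n y"
  unfolding hw_eq_sum sum.distrib[symmetric]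
  by (rule sum_mono) auto

lemma hw_add_mult: "hw n (\<lambda>c. x c + y c) + 2 * hw n (\<lambda>c. x c * y c) = hw n x + hw n y"
  unfolding hw_eq_sum sum.distrib[symmetric] sum_distrib_left
  by (rule sum.cong) auto

definition hw_outside :: "nat \<Rightarrow> (nat \<Rightarrow> bit) \<Rightarrow> (nat \<Rightarrow> bit) \<Rightarrow> nat" where
  "hw_outside n h x = card {c. c < 2^n \<and> x c \<noteq> 0 \<and> h c = 0}"

lemma hw_outside_eq_sum: "hw_outside n h x = (\<Sum>c<2^n. of_bool (x c \<noteq> 0 \<and> h c = 0))"
  unfolding hw_outside_def card_less_eq_sum ..

lemma hw_outside_Suc:
  "hw_outside (Suc n) h x = hw_outside n h x + hw_outside n (\<lambda>c. h (c + 2^n)) (\<lambda>c. x (c + 2^n))"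
  unfolding hw_outside_eq_sum power_Suc mult_2 sum_lessThan_add ..

lemma hw_outside_cong:
  "(\<And>c. c < 2^n \<Longrightarrow> h c = h' c \<and> x c = x' c) \<Longrightarrow> hw_outside n h x = hw_outside n h' x'"
  unfolding hw_outside_def by (metis (lifting))

lemma hw_outside_add_le: "hw_outside n h (\<lambda>c. x c + y c) \<le> hw_outside n h x + hw_outside n h y"
  unfolding hw_outside_eq_sum sum.distrib[symmetric]
  by (rule sum_mono) auto

lemma hw_outside_antimono:
  assumes "\<And>c. c < 2^n \<Longrightarrow> h c = 0 \<Longrightarrow> h' c = 0"
  shows "hw_outside n h x \<le> hw_outside n h' x"
  unfolding hw_outside_def using assms by (intro card_mono) auto

lemma hw_add_hw_outside: "hw n (\<lambda>c. h c + x c) + hw n x = hw n h + 2 * hw_outside n h x"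
  unfolding hw_eq_sum hw_outside_eq_sum sum.distrib[symmetric] sum_distrib_left
  by (rule sum.cong) auto

lemma grow_eq_0: "2^n \<le> r \<or> 2^n \<le> c \<Longrightarrow> grow n r c = 0"
proof (induction n arbitrary: r c)
  case 0
  then show ?case by (auto simp: grow_def)
next
  case (Suc n)
  then have "2 \<le> r div 2^n \<or> 2 \<le> c div 2^n"
    by (metis div_le_mono mult.commute nonzero_mult_div_cancel_left power_Suc power_not_zero zero_neq_numeral)
  then show ?case by (auto simp: grow_def kernF_def)
qed

text \<open>Row \<open>r\<close> of \<open>G\<^sub>2\<^sub>N\<close> restricted to the left (right) half of the coordinates is row
  \<open>low_row n r\<close> (\<open>high_row n r\<close>) of \<open>G\<^sub>N\<close>; the out-of-range index \<open>2^n\<close> stands for the zero row.\<close>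

definition low_row :: "nat \<Rightarrow> nat \<Rightarrow> nat" where
  "low_row n r = (if r < 2 * 2^n then r mod 2^n else 2^n)"

definition high_row :: "nat \<Rightarrow> nat \<Rightarrow> nat" where
  "high_row n r = (if 2^n \<le> r then r - 2^n else 2^n)"

lemma grow_Suc_low: "c < 2^n \<Longrightarrow> grow (Suc n) r c = grow n (low_row n r) c"
proof (cases "r < 2 * 2^n")
  case True
  then have "r div 2^n < 2" by (simp add: less_mult_imp_div_less)
  moreover assume "c < 2^n"
  ultimately show ?thesis using True by (simp add: grow_def low_row_def kernF_def)
next
  case False
  then show ?thesis by (simp add: grow_eq_0 low_row_def)
qed

lemma grow_Suc_high: "c < 2^n \<Longrightarrow> grow (Suc n) r (c + 2^n) = grow n (high_row n r) c"
proof -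
  assume c: "c < 2^n"
  then have c_split: "(c + 2^n) div 2^n = 1" "(c + 2^n) mod 2^n = c" by (simp_all add: div_add_self2)
  consider "r < 2^n" | "2^n \<le> r" "r < 2 * 2^n" | "2 * 2^n \<le> r" by linarith
  then show ?thesis
  proof cases
    case 1
    then show ?thesis using c_split grow_eq_0[of n "2^n" c] by (simp add: grow_def high_row_def kernF_def)
  next
    case 2
    then have "r div 2^n = 1" "r mod 2^n = r - 2^n" by (simp_all add: div_nat_eqI le_mod_geq)
    then show ?thesis using 2 c_split by (simp add: grow_def high_row_def kernF_def)
  next
    case 3
    then show ?thesis using c by (simp add: grow_eq_0 high_row_def)
  qed
qed

lemma low_high_row_simps:
  "r < 2^n \<Longrightarrow> low_row n r = r"
  "r < 2^n \<Longrightarrow> high_row n r = 2^n"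
  "r < 2^n \<Longrightarrow> low_row n (r + 2^n) = r"
  "r < 2^n \<Longrightarrow> high_row n (r + 2^n) = r"
  by (simp_all add: low_row_def high_row_def)

lemma grow_high_row_imp_low_row: "grow n (high_row n r) c \<noteq> 0 \<Longrightarrow> grow n (low_row n r) c \<noteq> 0"
proof -
  assume nz: "grow n (high_row n r) c \<noteq> 0"
  then have r: "2^n \<le> r" by (auto simp: high_row_def grow_eq_0 split: if_splits)
  with nz have "\<not> 2^n \<le> r - 2^n" using grow_eq_0[of n "r - 2^n" c] by (auto simp: high_row_def)
  with r nz show ?thesis by (auto simp: low_row_def high_row_def le_mod_geq not_le)
qed

definition codeword :: "nat \<Rightarrow> (nat \<Rightarrow> bit) \<Rightarrow> nat \<Rightarrow> bit" where
  "codeword n a = (\<lambda>c. \<Sum>k<2^n. a k * grow n k c)"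

lemma codeword_Suc_low:
  "c < 2^n \<Longrightarrow> codeword (Suc n) a c = codeword n a c + codeword n (\<lambda>k. a (k + 2^n)) c"
  unfolding codeword_def power_Suc mult_2 sum_lessThan_add
  by (intro arg_cong2[where f="(+)"] sum.cong) (simp_all add: grow_Suc_low low_high_row_simps)

lemma codeword_Suc_high: "c < 2^n \<Longrightarrow> codeword (Suc n) a (c + 2^n) = codeword n (\<lambda>k. a (k + 2^n)) c"
proof -
  assume c: "c < 2^n"
  have "(\<Sum>k<2^n. a k * grow (Suc n) k (c + 2^n)) = 0"
    using c by (intro sum.neutral) (simp add: grow_Suc_high low_high_row_simps grow_eq_0)
  moreover have "(\<Sum>k<2^n. a (k + 2^n) * grow (Suc n) (k + 2^n) (c + 2^n)) = codeword n (\<lambda>k. a (k + 2^n)) c"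
    unfolding codeword_def using c by (intro sum.cong) (simp_all add: grow_Suc_high low_high_row_simps)
  ultimately show ?thesis
    unfolding codeword_def power_Suc mult_2 sum_lessThan_add by simp
qed

definition first_one :: "nat \<Rightarrow> (nat \<Rightarrow> bit) \<Rightarrow> bool" where
  "first_one j a \<longleftrightarrow> a j = 1 \<and> (\<forall>k<j. a k = 0)"

lemma first_one_shift: "m \<le> j \<Longrightarrow> first_one j a \<Longrightarrow> first_one (j - m) (\<lambda>k. a (k + m))"
  unfolding first_one_def by simp

lemma codeword_first_one_high:
  assumes "first_one j a" "2^n \<le> j" "c < 2^n"
  shows "codeword (Suc n) a c = codeword n (\<lambda>k. a (k + 2^n)) c"
    and "codeword (Suc n) a (c + 2^n) = codeword n (\<lambda>k. a (k + 2^n)) c"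
proof -
  have "codeword n a c = 0"
    using assms unfolding codeword_def first_one_def by (intro sum.neutral) auto
  then show "codeword (Suc n) a c = codeword n (\<lambda>k. a (k + 2^n)) c"
    using assms(3) by (simp add: codeword_Suc_low)
  show "codeword (Suc n) a (c + 2^n) = codeword n (\<lambda>k. a (k + 2^n)) c"
    using assms(3) by (rule codeword_Suc_high)
qed

lemma hw_outside_grow_Suc:
  "hw_outside (Suc n) (grow (Suc n) r) x
     = hw_outside n (grow n (low_row n r)) x + hw_outside n (grow n (high_row n r)) (\<lambda>c. x (c + 2^n))"
  unfolding hw_outside_Suc
  by (intro arg_cong2[where f="(+)"] hw_outside_cong) (simp_all add: grow_Suc_low grow_Suc_high)

lemma hw_outside_grow_le_codeword:
  assumes "first_one j a" "j < 2^n"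
  shows "hw_outside n (grow n i) (grow n j) \<le> hw_outside n (grow n i) (codeword n a)"
  using assms
proof (induction n arbitrary: i j a)
  case 0
  then have "codeword 0 a = grow 0 j" by (auto simp: codeword_def first_one_def)
  then show ?case by simp
next
  case (Suc n)
  let ?hL = "grow n (low_row n i)" and ?hU = "grow n (high_row n i)"
  let ?a' = "\<lambda>k. a (k + 2^n)"
  show ?case
  proof (cases "j < 2^n")
    case True
    have "hw_outside n ?hU (\<lambda>c. grow (Suc n) j (c + 2^n)) = 0"
      using True by (simp add: hw_outside_def grow_Suc_high low_high_row_simps grow_eq_0)
    then have "hw_outside (Suc n) (grow (Suc n) i) (grow (Suc n) j) = hw_outside n ?hL (grow n j)"
      using True unfolding hw_outside_grow_Suc
      by (simp, intro hw_outside_cong) (simp add: grow_Suc_low low_high_row_simps)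
    also have "\<dots> \<le> hw_outside n ?hL (codeword n a)"
      using Suc.IH Suc.prems(1) True .
    also have "\<dots> \<le> hw_outside n ?hL (\<lambda>c. codeword n a c + codeword n ?a' c) + hw_outside n ?hL (codeword n ?a')"
      using hw_outside_add_le[of n ?hL "\<lambda>c. codeword n a c + codeword n ?a' c" "codeword n ?a'"]
      by (simp only: add.assoc bit_add_self add_0_right)
    also have "\<dots> \<le> hw_outside n ?hL (\<lambda>c. codeword n a c + codeword n ?a' c) + hw_outside n ?hU (codeword n ?a')"
      using grow_high_row_imp_low_row by (intro add_left_mono hw_outside_antimono) blast
    also have "\<dots> = hw_outside (Suc n) (grow (Suc n) i) (codeword (Suc n) a)"
      unfolding hw_outside_grow_Suc
      by (intro arg_cong2[where f="(+)"] hw_outside_cong) (simp_all add: codeword_Suc_low codeword_Suc_high)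
    finally show ?thesis .
  next
    case False
    then have j: "first_one (j - 2^n) ?a'" "j - 2^n < 2^n" "j mod 2^n = j - 2^n"
      using Suc.prems by (simp_all add: first_one_shift le_mod_geq)
    have "hw_outside (Suc n) (grow (Suc n) i) (grow (Suc n) j)
        = hw_outside n ?hL (grow n (j - 2^n)) + hw_outside n ?hU (grow n (j - 2^n))"
      unfolding hw_outside_grow_Suc using False Suc.prems(2) j(3)
      by (intro arg_cong2[where f="(+)"] hw_outside_cong) (simp_all add: grow_Suc_low grow_Suc_high low_row_def high_row_def)
    also have "\<dots> \<le> hw_outside n ?hL (codeword n ?a') + hw_outside n ?hU (codeword n ?a')"
      using j by (intro add_mono Suc.IH)
    also have "\<dots> = hw_outside (Suc n) (grow (Suc n) i) (codeword (Suc n) a)"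
      unfolding hw_outside_grow_Suc using False Suc.prems(1)
      by (intro arg_cong2[where f="(+)"] hw_outside_cong) (simp_all add: codeword_first_one_high)
    finally show ?thesis .
  qed
qed

lemma hw_grow_Suc_add:
  "hw (Suc n) (\<lambda>c. grow (Suc n) r c + x c)
     = hw n (\<lambda>c. grow n (low_row n r) c + x c) + hw n (\<lambda>c. grow n (high_row n r) c + x (c + 2^n))"
  unfolding hw_Suc
  by (intro arg_cong2[where f="(+)"] hw_cong) (simp_all add: grow_Suc_low grow_Suc_high)

lemma hw_grow_add_le_codeword:
  assumes "i < j" "j < 2^n" "first_one j a"
  shows "hw n (\<lambda>c. grow n i c + grow n j c) \<le> hw n (\<lambda>c. grow n i c + codeword n a c)"
  using assms
proof (induction n arbitrary: i j a)
  case 0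
  then show ?case by simp
next
  case (Suc n)
  let ?a' = "\<lambda>k. a (k + 2^n)"
  have j: "j < 2 * 2^n" using Suc.prems by simp
  consider "2^n \<le> i" | "j < 2^n" | "i < 2^n" "2^n \<le> j" by linarith
  then show ?case
  proof cases
    case 1
    then have ij: "i - 2^n < j - 2^n" "j - 2^n < 2^n" "first_one (j - 2^n) ?a'"
      using Suc.prems j by (simp_all add: first_one_shift)
    have rows: "low_row n i = i - 2^n" "high_row n i = i - 2^n" "low_row n j = j - 2^n" "high_row n j = j - 2^n"
      using 1 Suc.prems j by (simp_all add: low_row_def high_row_def le_mod_geq)
    have "hw (Suc n) (\<lambda>c. grow (Suc n) i c + grow (Suc n) j c)
        = hw n (\<lambda>c. grow n (i - 2^n) c + grow n (j - 2^n) c) + hw n (\<lambda>c. grow n (i - 2^n) c + grow n (j - 2^n) c)"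
      unfolding hw_grow_Suc_add rows
      by (intro arg_cong2[where f="(+)"] hw_cong) (simp_all add: grow_Suc_low grow_Suc_high rows)
    also have "\<dots> \<le> hw n (\<lambda>c. grow n (i - 2^n) c + codeword n ?a' c) + hw n (\<lambda>c. grow n (i - 2^n) c + codeword n ?a' c)"
      using ij by (intro add_mono Suc.IH)
    also have "\<dots> = hw (Suc n) (\<lambda>c. grow (Suc n) i c + codeword (Suc n) a c)"
      unfolding hw_grow_Suc_add rows using 1 Suc.prems
      by (intro arg_cong2[where f="(+)"] hw_cong) (simp_all add: codeword_first_one_high)
    finally show ?thesis .
  next
    case 2
    have "hw n (\<lambda>c. grow n (high_row n i) c + grow (Suc n) j (c + 2^n)) = 0"
      using 2 Suc.prems(1) by (simp add: hw_def grow_Suc_high low_high_row_simps grow_eq_0)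
    then have "hw (Suc n) (\<lambda>c. grow (Suc n) i c + grow (Suc n) j c) = hw n (\<lambda>c. grow n i c + grow n j c)"
      unfolding hw_grow_Suc_add using 2 Suc.prems(1)
      by (simp, intro hw_cong) (simp add: grow_Suc_low low_high_row_simps)
    also have "\<dots> \<le> hw n (\<lambda>c. grow n i c + codeword n a c)"
      using Suc.prems(1) 2 Suc.prems(3) by (rule Suc.IH)
    also have "\<dots> \<le> hw n (\<lambda>c. grow n i c + (codeword n a c + codeword n ?a' c)) + hw n (codeword n ?a')"
      using hw_add_le[of n "\<lambda>c. grow n i c + (codeword n a c + codeword n ?a' c)" "codeword n ?a'"]
      by (simp only: add.assoc bit_add_self add_0_right)
    also have "\<dots> = hw (Suc n) (\<lambda>c. grow (Suc n) i c + codeword (Suc n) a c)"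
      unfolding hw_grow_Suc_add using 2 Suc.prems(1)
      by (intro arg_cong2[where f="(+)"] hw_cong)
        (simp_all add: codeword_Suc_low codeword_Suc_high low_high_row_simps grow_eq_0)
    finally show ?thesis .
  next
    case 3
    txt \<open>By \<open>hw_add_hw_outside\<close> both sides are \<open>w(g\<^sub>i)\<close> plus twice a weight outside the
      support of \<open>g\<^sub>i\<close>, so the claim is the invariant \<open>hw_outside_grow_le_codeword\<close>.\<close>
    let ?x = "grow n (j - 2^n)" and ?y = "codeword n ?a'"
    have j': "j - 2^n < 2^n" "first_one (j - 2^n) ?a'" "low_row n j = j - 2^n" "high_row n j = j - 2^n"
      using 3 Suc.prems j by (simp_all add: first_one_shift low_row_def high_row_def le_mod_geq)
    have "hw (Suc n) (\<lambda>c. grow (Suc n) i c + grow (Suc n) j c) = hw n (\<lambda>c. grow n i c + ?x c) + hw n ?x"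
      unfolding hw_grow_Suc_add using 3
      by (intro arg_cong2[where f="(+)"] hw_cong) (simp_all add: grow_Suc_low grow_Suc_high low_high_row_simps j' grow_eq_0)
    also have "\<dots> = hw n (grow n i) + 2 * hw_outside n (grow n i) ?x"
      by (rule hw_add_hw_outside)
    also have "\<dots> \<le> hw n (grow n i) + 2 * hw_outside n (grow n i) ?y"
      using j' by (simp add: hw_outside_grow_le_codeword)
    also have "\<dots> = hw n (\<lambda>c. grow n i c + ?y c) + hw n ?y"
      by (rule hw_add_hw_outside[symmetric])
    also have "\<dots> = hw (Suc n) (\<lambda>c. grow (Suc n) i c + codeword (Suc n) a c)"
      unfolding hw_grow_Suc_add using 3 Suc.prems(3)
      by (intro arg_cong2[where f="(+)"] hw_cong)
        (simp_all add: codeword_first_one_high low_high_row_simps grow_eq_0)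
    finally show ?thesis .
  qed
qed

lemma cosetC_eq_grow_add_codeword:
  assumes "x \<in> cosetC n i j" "j < 2^n"
  obtains a where "first_one j a" "x = (\<lambda>c. grow n i c + codeword n a c)"
proof -
  obtain b where x: "x = (\<lambda>c. grow n i c + grow n j c + (\<Sum>k\<in>{Suc j..<2^n}. b k * grow n k c))"
    using assms(1) unfolding cosetC_def gf2_span_def by auto
  define a where "a k = (if k < j then 0 else if k = j then 1 else b k)" for k
  have "codeword n a c = grow n j c + (\<Sum>k\<in>{Suc j..<2^n}. b k * grow n k c)" for c
  proof -
    have "codeword n a c = (\<Sum>k<Suc j. a k * grow n k c) + (\<Sum>k\<in>{Suc j..<2^n}. a k * grow n k c)"
      unfolding codeword_def lessThan_atLeast0 using assms(2)
      by (intro sum.atLeastLessThan_concat[symmetric]) simp_all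
    then show ?thesis by (simp add: a_def)
  qed
  then have "x = (\<lambda>c. grow n i c + codeword n a c)"
    unfolding x by (simp only: add.assoc)
  moreover have "first_one j a" by (simp add: first_one_def a_def)
  ultimately show thesis using that by blast
qed

lemma bitk_mod_pow: "k < n \<Longrightarrow> bitk k (i mod 2^n) = bitk k i"
proof -
  assume "k < n"
  then have "bit (i mod 2^n) k = bit i k" by (simp add: bit_take_bit_iff flip: take_bit_eq_mod)
  then show ?thesis unfolding bitk_def by (simp add: bit_iff_odd mod2_eq_if)
qed

lemma bitk_top: "i < 2 * 2^n \<Longrightarrow> bitk n i = of_bool (2^n \<le> i)"
proof -
  assume "i < 2 * 2^n"
  then have "i div 2^n < 2" by (simp add: less_mult_imp_div_less)
  moreover have "2^n \<le> i \<longleftrightarrow> 1 \<le> i div 2^n"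
    by (simp add: div_greater_zero_iff Suc_le_eq)
  ultimately show ?thesis unfolding bitk_def by auto
qed

lemma tij_Suc: "tij (Suc n) i j = tij n (i mod 2^n) (j mod 2^n) + bitk n i * bitk n j"
  unfolding tij_def by (simp add: bitk_mod_pow)

lemma hw_grow_mult: "i < 2^n \<Longrightarrow> j < 2^n \<Longrightarrow> hw n (\<lambda>c. grow n i c * grow n j c) = 2 ^ tij n i j"
proof (induction n arbitrary: i j)
  case 0
  then show ?case by (simp add: hw_def tij_def grow_def)
next
  case (Suc n)
  let ?m = "2^n :: nat"
  have ij: "i < 2 * ?m" "j < 2 * ?m" using Suc.prems by simp_all
  let ?high = "hw n (\<lambda>c. grow (Suc n) i (c + ?m) * grow (Suc n) j (c + ?m))"
  have "hw n (\<lambda>c. grow (Suc n) i c * grow (Suc n) j c) = hw n (\<lambda>c. grow n (i mod ?m) c * grow n (j mod ?m) c)"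
    using ij by (intro hw_cong) (simp add: grow_Suc_low low_row_def)
  then have "hw (Suc n) (\<lambda>c. grow (Suc n) i c * grow (Suc n) j c) = 2 ^ tij n (i mod ?m) (j mod ?m) + ?high"
    unfolding hw_Suc using Suc.IH[of "i mod ?m" "j mod ?m"] by simp
  moreover have "?high = 2 ^ tij n (i mod ?m) (j mod ?m) * bitk n i * bitk n j"
  proof (cases "?m \<le> i \<and> ?m \<le> j")
    case True
    then have "high_row n i = i mod ?m" "high_row n j = j mod ?m"
      using ij by (simp_all add: high_row_def le_mod_geq)
    then have "?high = hw n (\<lambda>c. grow n (i mod ?m) c * grow n (j mod ?m) c)"
      by (intro hw_cong) (simp add: grow_Suc_high)
    then show ?thesis using True ij Suc.IH[of "i mod ?m" "j mod ?m"] by (simp add: bitk_top)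
  next
    case False
    then have "?high = 0"
      by (auto simp: hw_def grow_Suc_high high_row_def grow_eq_0)
    then show ?thesis using False ij by (auto simp: bitk_top)
  qed
  ultimately show ?case
    using bitk_top[OF ij(1)] bitk_top[OF ij(2)] by (cases "?m \<le> i"; cases "?m \<le> j") (simp_all add: tij_Suc)
qed

theorem theorem5:
  fixes n i j :: nat
  assumes "i < j" and "j < 2^n"
  shows "(\<forall>x \<in> cosetC n i j. hw n x \<ge> hw n (\<lambda>c. grow n i c + grow n j c))
    \<and> int (hw n (\<lambda>c. grow n i c + grow n j c))
        = int (hw n (grow n i)) + int (hw n (grow n j)) - 2 ^ (tij n i j + 1)"
proof
  show "\<forall>x \<in> cosetC n i j. hw n x \<ge> hw n (\<lambda>c. grow n i c + grow n j c)"
  proof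
    fix x assume "x \<in> cosetC n i j"
    then obtain a where "first_one j a" and x: "x = (\<lambda>c. grow n i c + codeword n a c)"
      using assms(2) by (rule cosetC_eq_grow_add_codeword)
    then show "hw n x \<ge> hw n (\<lambda>c. grow n i c + grow n j c)"
      unfolding x using assms by (intro hw_grow_add_le_codeword)
  qed
next
  have "hw n (\<lambda>c. grow n i c + grow n j c) + 2 * 2 ^ tij n i j = hw n (grow n i) + hw n (grow n j)"
    using hw_add_mult[of n "grow n i" "grow n j"] hw_grow_mult[of i n j] assms by simp
  then have "int (hw n (\<lambda>c. grow n i c + grow n j c) + 2 * 2 ^ tij n i j)
      = int (hw n (grow n i) + hw n (grow n j))"
    by (rule arg_cong)
  then show "int (hw n (\<lambda>c. grow n i c + grow n j c))
        = int (hw n (grow n i)) + int (hw n (grow n j)) - 2 ^ (tij n i j + 1)"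
    by simp
qed

end
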